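(* Let $k\in[K]$ and suppose the OWA weights satisfy $v_1=\dots=v_{k-1}=0$ and $v_k>0$. Let $\hat\pi$ be an optimal solution of \textsc{Min-Quant}$(k)$~$1|prec|\max w_jT_j$, i.e. $\hat\pi\in\Pi$ minimizes the $k$th largest value among $f(\pi,S_1),\dots,f(\pi,S_K)$. Then $\mathrm{OWA}(\hat\pi)\le (1/v_k)\,\mathrm{OWA}(\pi)$ for every $\pi\in\Pi$. Moreover, the bound is tight: for every $K\ge 2$ there is an instance (with $k=1$, $v_i=1/K$ for all $i$, no precedence constraints, unit processing times and unit weights under all scenarios) and an optimal solution $\hat\pi$ of \textsc{Min-Quant}$(1)$ (= \textsc{Min-Max}) such that $\mathrm{OWA}(\hat\pi)=(1/v_1)\min_{\pi\in\Pi}\mathrm{OWA}(\pi)>0$.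
   Context: Single machine scheduling under scenarios. A set of jobs $J=\{1,\dots,n\}$ must be processed nonpreemptively on one machine, all jobs being available at time $0$; jobs may be subject to precedence constraints given by a partial order ($i\rightarrow j$ means job $j$ cannot start before job $i$ is completed). A schedule is a permutation $\pi$ of $J$ respecting the precedence constraints; $\Pi$ denotes the set of all schedules. A scenario set $\Gamma=\{S_1,\dots,S_K\}$, $K>1$, is given; under scenario $S_i$ job $j$ has a nonnegative processing time $p_j(S_i)$, nonnegative due date $d_j(S_i)$ and nonnegative weight $w_j(S_i)$. $C_j(\pi,S_i)$ is the completion time of $j$ in $\pi$ under $S_i$, i.e. the sum of $p_k(S_i)$ over $k=j$ and all jobs $k$ preceding $j$ in $\pi$. The cost of $\pi$ under $S_i$ is $f(\pi,S_i)=\max_{j\in J} w_j(S_i)[C_j(\pi,S_i)-d_j(S_i)]^+$, where $[x]^+=\max\{0,x\}$. OWA criterion: given weights $\pmb v=(v_1,\dots,v_K)$ with $v_i\in[0,1]$ and $\sum_i v_i=1$, and reals $f_1,\dots,f_K$, let $\sigma$ be a permutation of $[K]$ with $f_{\sigma(1)}\ge\dots\ge f_{\sigma(K)}$ and set $\mathrm{owa}_{\pmb v}(f_1,\dots,f_K)=\sum_{i\in[K]}v_if_{\sigma(i)}$. Set $\mathrm{OWA}(\pi)=\mathrm{owa}_{\pmb v}(f(\pi,S_1),\dots,f(\pi,S_K))$. *)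

theory Defs
  imports Complex_Main
begin

text \<open>Scenarios are indexed by 1..K; p s j, d s j, w s j are the processing time,
  due date and weight of job j under scenario s.\<close>

definition schedules :: "'a set \<Rightarrow> ('a \<times> 'a) set \<Rightarrow> 'a list set" where
  "schedules J prec = {\<pi>. distinct \<pi> \<and> set \<pi> = J \<and>
     (\<forall>a b. a < length \<pi> \<longrightarrow> b < length \<pi> \<longrightarrow> (\<pi> ! a, \<pi> ! b) \<in> prec \<longrightarrow> a < b)}"

definition compl_time :: "'a list \<Rightarrow> ('a \<Rightarrow> real) \<Rightarrow> 'a \<Rightarrow> real" where
  "compl_time \<pi> pt j = sum_list (map pt (takeWhile (\<lambda>x. x \<noteq> j) \<pi>)) + pt j"

definition cost :: "'a set \<Rightarrow> (nat \<Rightarrow> 'a \<Rightarrow> real) \<Rightarrow> (nat \<Rightarrow> 'a \<Rightarrow> real) \<Rightarrow>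
    (nat \<Rightarrow> 'a \<Rightarrow> real) \<Rightarrow> 'a list \<Rightarrow> nat \<Rightarrow> real" where
  "cost J p d w \<pi> s = Max ((\<lambda>j. w s j * max 0 (compl_time \<pi> (p s) j - d s j)) ` J)"

text \<open>Values f_1..f_K sorted nonincreasingly (as a list, position 0 = largest).\<close>
definition sorted_desc :: "nat \<Rightarrow> (nat \<Rightarrow> real) \<Rightarrow> real list" where
  "sorted_desc K f = rev (sort (map f [1..<K+1]))"

definition owa :: "nat \<Rightarrow> (nat \<Rightarrow> real) \<Rightarrow> (nat \<Rightarrow> real) \<Rightarrow> real" where
  "owa K v f = (\<Sum>i=1..K. v i * sorted_desc K f ! (i - 1))"

definition kth_largest :: "nat \<Rightarrow> nat \<Rightarrow> (nat \<Rightarrow> real) \<Rightarrow> real" where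
  "kth_largest K k f = sorted_desc K f ! (k - 1)"

definition OWA :: "nat \<Rightarrow> (nat \<Rightarrow> real) \<Rightarrow> 'a set \<Rightarrow> (nat \<Rightarrow> 'a \<Rightarrow> real) \<Rightarrow>
    (nat \<Rightarrow> 'a \<Rightarrow> real) \<Rightarrow> (nat \<Rightarrow> 'a \<Rightarrow> real) \<Rightarrow> 'a list \<Rightarrow> real" where
  "OWA K v J p d w \<pi> = owa K v (cost J p d w \<pi>)"

definition quant :: "nat \<Rightarrow> nat \<Rightarrow> 'a set \<Rightarrow> (nat \<Rightarrow> 'a \<Rightarrow> real) \<Rightarrow>
    (nat \<Rightarrow> 'a \<Rightarrow> real) \<Rightarrow> (nat \<Rightarrow> 'a \<Rightarrow> real) \<Rightarrow> 'a list \<Rightarrow> real" where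
  "quant K k J p d w \<pi> = kth_largest K k (cost J p d w \<pi>)"

definition owa_weights :: "nat \<Rightarrow> (nat \<Rightarrow> real) \<Rightarrow> bool" where
  "owa_weights K v \<longleftrightarrow> (\<forall>i\<in>{1..K}. 0 \<le> v i \<and> v i \<le> 1) \<and> (\<Sum>i=1..K. v i) = 1"

definition valid_instance :: "nat \<Rightarrow> 'a set \<Rightarrow> ('a \<times> 'a) set \<Rightarrow> (nat \<Rightarrow> 'a \<Rightarrow> real) \<Rightarrow>
    (nat \<Rightarrow> 'a \<Rightarrow> real) \<Rightarrow> (nat \<Rightarrow> 'a \<Rightarrow> real) \<Rightarrow> bool" where
  "valid_instance K J prec p d w \<longleftrightarrow> finite J \<and> J \<noteq> {} \<and> prec \<subseteq> J \<times> J \<and>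
     irrefl prec \<and> trans prec \<and>
     (\<forall>s\<in>{1..K}. \<forall>j\<in>J. 0 \<le> p s j \<and> 0 \<le> d s j \<and> 0 \<le> w s j)"

end

theory Submission
  imports Defs
begin

text \<open>
  Write \<open>q(f)\<close> for the k-th largest of the values \<open>f 1, \<dots>, f K\<close>.
  If \<open>v 1 = \<dots> = v (k-1) = 0\<close>, every value still carrying positive weight is at
  most \<open>q(f)\<close>, hence \<open>owa v f \<le> q(f)\<close> because the weights sum to one.
  Conversely, for nonnegative values the single summand at position k gives
  \<open>v k * q(g) \<le> owa v g\<close>.  Chaining both with \<open>q(f) \<le> q(g)\<close> yields
  \<open>owa v f \<le> (1 / v k) * owa v g\<close>; applied to the (nonnegative) scenario costs
  of a Min-Quant(k) optimal schedule and an arbitrary schedule this is the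
  approximation bound.

  Tightness: two unit jobs 0 and 1, job 0 due at time 1 in every scenario and
  job 1 due at time 1 in scenario 1 and at time 2 otherwise.  Schedule [1,0]
  costs 1 in every scenario, [0,1] costs 1 in scenario 1 and 0 elsewhere.  Both
  have maximum cost 1, so [1,0] is Min-Max optimal, yet with uniform weights
  its OWA value 1 is exactly K = 1 / v 1 times the optimum 1/K.
\<close>


lemma sorted_desc_length [simp]: "length (sorted_desc K f) = K"
  by (simp add: sorted_desc_def)

lemma sorted_desc_antitone:
  assumes "i \<le> j" "j < K"
  shows "sorted_desc K f ! j \<le> sorted_desc K f ! i"
proof -
  let ?s = "sort (map f [1..<K+1])"
  have "?s ! (K - Suc j) \<le> ?s ! (K - Suc i)"
    by (rule sorted_nth_mono) (use assms in auto)
  thus ?thesis using assms unfolding sorted_desc_def by (simp add: rev_nth)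
qed

lemma sorted_desc_nonneg:
  assumes "\<forall>s\<in>{1..K}. 0 \<le> f s" "i < K"
  shows "0 \<le> sorted_desc K f ! i"
proof -
  have "sorted_desc K f ! i \<in> set (sorted_desc K f)"
    using assms(2) by simp
  hence "sorted_desc K f ! i \<in> f ` {1..K}"
    unfolding sorted_desc_def by auto
  thus ?thesis using assms(1) by auto
qed


text \<open>If the first \<open>k - 1\<close> weights vanish, the OWA value is at most the k-th
  largest value: it is a convex combination of values not exceeding it.\<close>
lemma owa_le_kth_largest:
  assumes k: "k \<in> {1..K}" and v: "owa_weights K v"
    and leading_zero: "\<forall>i\<in>{1..<k}. v i = 0"
  shows "owa K v f \<le> kth_largest K k f"
proof -
  have v_nonneg: "\<forall>i\<in>{1..K}. 0 \<le> v i" and v_sum: "(\<Sum>i=1..K. v i) = 1"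
    using v unfolding owa_weights_def by auto
  let ?q = "kth_largest K k f"
  have "owa K v f \<le> (\<Sum>i=1..K. v i * ?q)"
    unfolding owa_def
  proof (rule sum_mono)
    fix i assume i: "i \<in> {1..K}"
    show "v i * sorted_desc K f ! (i - 1) \<le> v i * ?q"
    proof (cases "i < k")
      case True thus ?thesis using leading_zero i by auto
    next
      case False
      hence "sorted_desc K f ! (i - 1) \<le> ?q"
        using i k unfolding kth_largest_def by (intro sorted_desc_antitone) auto
      thus ?thesis using v_nonneg i by (simp add: mult_left_mono)
    qed
  qed
  also have "\<dots> = ?q" using v_sum by (simp add: sum_distrib_right[symmetric])
  finally show ?thesis .
qed

text \<open>For nonnegative values, the k-th summand alone bounds the OWA value below.\<close>
lemma weighted_kth_largest_le_owa:
  assumes k: "k \<in> {1..K}" and v: "owa_weights K v"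
    and g_nonneg: "\<forall>s\<in>{1..K}. 0 \<le> g s"
  shows "v k * kth_largest K k g \<le> owa K v g"
proof -
  have "\<forall>i\<in>{1..K}. 0 \<le> v i * sorted_desc K g ! (i - 1)"
    using v sorted_desc_nonneg[OF g_nonneg] unfolding owa_weights_def by auto
  hence "v k * sorted_desc K g ! (k - 1) \<le> (\<Sum>i=1..K. v i * sorted_desc K g ! (i - 1))"
    using k by (intro member_le_sum) auto
  thus ?thesis unfolding owa_def kth_largest_def .
qed

lemma owa_le_scaled_owa_of_kth_largest_le:
  assumes k: "k \<in> {1..K}" and v: "owa_weights K v"
    and leading_zero: "\<forall>i\<in>{1..<k}. v i = 0" and vk_pos: "0 < v k"
    and g_nonneg: "\<forall>s\<in>{1..K}. 0 \<le> g s"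
    and kth_le: "kth_largest K k f \<le> kth_largest K k g"
  shows "owa K v f \<le> (1 / v k) * owa K v g"
proof -
  have "owa K v f \<le> kth_largest K k f"
    using owa_le_kth_largest[OF k v leading_zero] .
  also have "\<dots> \<le> kth_largest K k g" by (rule kth_le)
  also have "\<dots> \<le> (1 / v k) * owa K v g"
    using weighted_kth_largest_le_owa[OF k v g_nonneg] vk_pos
    by (simp add: field_simps)
  finally show ?thesis .
qed


lemma cost_nonneg:
  assumes "valid_instance K J prec p d w" "s \<in> {1..K}"
  shows "0 \<le> cost J p d w \<pi> s"
proof -
  from assms have J: "finite J" "J \<noteq> {}" and w_nonneg: "\<forall>j\<in>J. 0 \<le> w s j"
    unfolding valid_instance_def by auto
  then obtain j where j: "j \<in> J" by auto
  have "0 \<le> w s j * max 0 (compl_time \<pi> (p s) j - d s j)"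
    using w_nonneg j by simp
  thus ?thesis unfolding cost_def using J j by (subst Max_ge_iff) auto
qed

lemma min_quant_owa_approximation:
  assumes "k \<in> {1..K}" "owa_weights K v" "\<forall>i\<in>{1..<k}. v i = 0" "0 < v k"
    and "valid_instance K J prec p d w"
    and opt: "\<forall>\<pi>\<in>schedules J prec. quant K k J p d w \<pi>h \<le> quant K k J p d w \<pi>"
    and "\<pi> \<in> schedules J prec"
  shows "OWA K v J p d w \<pi>h \<le> (1 / v k) * OWA K v J p d w \<pi>"
  unfolding OWA_def
proof (rule owa_le_scaled_owa_of_kth_largest_le[OF assms(1-4)])
  show "\<forall>s\<in>{1..K}. 0 \<le> cost J p d w \<pi> s"
    using cost_nonneg[OF assms(5)] by blast
  show "kth_largest K k (cost J p d w \<pi>h) \<le> kth_largest K k (cost J p d w \<pi>)"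
    using opt assms(7) unfolding quant_def by blast
qed


definition tight_due :: "nat \<Rightarrow> nat \<Rightarrow> real" where
  "tight_due s j = (if j = 0 then 1 else if s = 1 then 1 else 2)"

lemma schedules_two_jobs: "schedules {0::nat, 1} {} = {[0, 1], [1, 0]}"
proof (intro equalityI subsetI)
  fix xs assume "xs \<in> schedules {0::nat, 1} {}"
  hence xs: "distinct xs" "set xs = {0, 1}" unfolding schedules_def by blast+
  hence "length xs = 2" using distinct_card[of xs] by simp
  then obtain a b where ab: "xs = [a, b]"
    by (metis One_nat_def Suc_1 length_0_conv length_Suc_conv)
  have "a \<noteq> b" "a \<in> {0, 1}" "b \<in> {0, 1}"
    using xs unfolding ab by auto
  then show "xs \<in> {[0, 1], [1, 0]}" unfolding ab by fastforce
qed (auto simp: schedules_def)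

lemma tight_cost_1_0:
  "cost {0::nat, 1} (\<lambda>s j. 1) tight_due (\<lambda>s j. 1) [1, 0] = (\<lambda>s. 1)"
  by (rule ext) (simp add: cost_def compl_time_def tight_due_def)

lemma tight_cost_0_1:
  "cost {0::nat, 1} (\<lambda>s j. 1) tight_due (\<lambda>s j. 1) [0, 1] = (\<lambda>s. if s = 1 then 1 else 0)"
  by (rule ext) (simp add: cost_def compl_time_def tight_due_def)

lemma sorted_desc_const_one: "sorted_desc K (\<lambda>s. 1) = replicate K 1"
  unfolding sorted_desc_def by (simp add: map_replicate_const sorted_sort_id)

lemma sorted_desc_indicator_1:
  assumes "1 \<le> K"
  shows "sorted_desc K (\<lambda>s. if s = 1 then 1 else 0) = 1 # replicate (K - 1) (0::real)"
proof -
  have "map (\<lambda>s. if s = 1 then 1 else 0) [2..<K+1] = map (\<lambda>s. 0::real) [2..<K+1]"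
    by (rule map_cong) auto
  also have "\<dots> = replicate (K - 1) 0"
    by (simp only: map_replicate_const length_upt) simp
  finally have tail: "map (\<lambda>s. if s = 1 then 1 else 0) [2..<K+1] = replicate (K - 1) (0::real)" .
  have "[1..<K+1] = 1 # [2..<K+1]"
    using assms upt_conv_Cons[of 1 "K+1"] by (simp add: numeral_2_eq_2)
  hence "map (\<lambda>s. if s = 1 then 1 else 0) [1..<K+1] = 1 # replicate (K - 1) (0::real)"
    using tail by simp
  moreover have "insort (1::real) (replicate n 0) = replicate n 0 @ [1]" for n
    by (induction n) auto
  ultimately show ?thesis
    unfolding sorted_desc_def by (simp add: sorted_sort_id)
qed

lemma owa_uniform_const_one:
  assumes "1 \<le> K"
  shows "owa K (\<lambda>i. 1 / real K) (\<lambda>s. 1) = 1"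
proof -
  have "(\<Sum>i=1..K. 1 / real K * replicate K (1::real) ! (i - 1)) = (\<Sum>i=1..K. 1 / real K)"
    by (rule sum.cong) auto
  thus ?thesis unfolding owa_def sorted_desc_const_one using assms by simp
qed

lemma owa_uniform_indicator_1:
  assumes "1 \<le> K"
  shows "owa K (\<lambda>i. 1 / real K) (\<lambda>s. if s = 1 then 1 else 0) = 1 / real K"
proof -
  have "(\<Sum>i=1..K. 1 / real K * (1 # replicate (K - 1) (0::real)) ! (i - 1))
      = (\<Sum>i=1..K. if i = 1 then 1 / real K else 0)"
    by (rule sum.cong) (auto simp: nth_Cons')
  also have "\<dots> = 1 / real K" using assms by simp
  finally show ?thesis unfolding owa_def sorted_desc_indicator_1[OF assms] .
qed

lemma min_max_bound_tight:
  assumes K: "2 \<le> K"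
  shows "\<exists>(J::nat set) d \<pi>h.
         let v = (\<lambda>i. 1 / real K); prec = {}; p = (\<lambda>s j. 1); w = (\<lambda>s j. 1) in
         owa_weights K v \<and> valid_instance K J prec p d w \<and>
         \<pi>h \<in> schedules J prec \<and>
         (\<forall>\<pi>\<in>schedules J prec. quant K 1 J p d w \<pi>h \<le> quant K 1 J p d w \<pi>) \<and>
         OWA K v J p d w \<pi>h = (1 / v 1) * Min (OWA K v J p d w ` schedules J prec) \<and>
         0 < (1 / v 1) * Min (OWA K v J p d w ` schedules J prec)"
proof -
  have K1: "1 \<le> K" using K by simp
  let ?v = "\<lambda>i::nat. 1 / real K"
  let ?quant = "quant K 1 {0::nat, 1} (\<lambda>s j. 1) tight_due (\<lambda>s j. 1)"
  let ?OWA = "OWA K ?v {0::nat, 1} (\<lambda>s j. 1) tight_due (\<lambda>s j. 1)"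
  have weights: "owa_weights K ?v" unfolding owa_weights_def using K by auto
  have valid: "valid_instance K {0::nat, 1} {} (\<lambda>s j. 1) tight_due (\<lambda>s j. 1)"
    unfolding valid_instance_def tight_due_def by (auto simp: irrefl_def trans_def)
  have "?quant [1, 0] = 1" "?quant [0, 1] = 1"
    unfolding quant_def kth_largest_def tight_cost_1_0 tight_cost_0_1
      sorted_desc_const_one sorted_desc_indicator_1[OF K1] using K1 by simp_all
  hence min_max_opt: "\<forall>\<pi>\<in>schedules {0, 1} {}. ?quant [1, 0] \<le> ?quant \<pi>"
    unfolding schedules_two_jobs by simp
  have owa_1_0: "?OWA [1, 0] = 1"
    unfolding OWA_def tight_cost_1_0 using owa_uniform_const_one[OF K1] .
  have owa_0_1: "?OWA [0, 1] = 1 / real K"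
    unfolding OWA_def tight_cost_0_1 using owa_uniform_indicator_1[OF K1] .
  have owa_min: "Min (?OWA ` schedules {0, 1} {}) = 1 / real K"
    unfolding schedules_two_jobs using owa_1_0 owa_0_1 K by (simp add: min_def)
  show ?thesis
    unfolding Let_def
  proof (intro exI[of _ "{0::nat, 1}"] exI[of _ tight_due] exI[of _ "[1, 0]"] conjI)
    show "[1, 0] \<in> schedules {0::nat, 1} {}" unfolding schedules_two_jobs by simp
    show "?OWA [1, 0] = (1 / ?v 1) * Min (?OWA ` schedules {0, 1} {})"
      unfolding owa_min owa_1_0 using K by simp
    show "0 < (1 / ?v 1) * Min (?OWA ` schedules {0, 1} {})"
      unfolding owa_min using K by simp
  qed (fact weights valid min_max_opt)+
qed


theorem theorem7:
  shows
  "(\<forall>(K::nat) k v (J::'a set) prec p d w \<pi>h.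
      1 < K \<longrightarrow> k \<in> {1..K} \<longrightarrow> owa_weights K v \<longrightarrow>
      (\<forall>i\<in>{1..<k}. v i = 0) \<longrightarrow> 0 < v k \<longrightarrow>
      valid_instance K J prec p d w \<longrightarrow>
      \<pi>h \<in> schedules J prec \<longrightarrow>
      (\<forall>\<pi>\<in>schedules J prec. quant K k J p d w \<pi>h \<le> quant K k J p d w \<pi>) \<longrightarrow>
      (\<forall>\<pi>\<in>schedules J prec. OWA K v J p d w \<pi>h \<le> (1 / v k) * OWA K v J p d w \<pi>))
   \<and>
   (\<forall>K::nat. 2 \<le> K \<longrightarrow>
      (\<exists>(J::nat set) d \<pi>h.
         let v = (\<lambda>i. 1 / real K); prec = {}; p = (\<lambda>s j. 1); w = (\<lambda>s j. 1) in
         owa_weights K v \<and> valid_instance K J prec p d w \<and>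
         \<pi>h \<in> schedules J prec \<and>
         (\<forall>\<pi>\<in>schedules J prec. quant K 1 J p d w \<pi>h \<le> quant K 1 J p d w \<pi>) \<and>
         OWA K v J p d w \<pi>h = (1 / v 1) * Min (OWA K v J p d w ` schedules J prec) \<and>
         0 < (1 / v 1) * Min (OWA K v J p d w ` schedules J prec)))"
proof (intro conjI allI impI ballI)
  fix K k v and J :: "'a set" and prec p d w \<pi>h \<pi>
  assume "1 < K" "k \<in> {1..K}" "owa_weights K v" "\<forall>i\<in>{1..<k}. v i = 0" "0 < v k"
    "valid_instance K J prec p d w" "\<pi>h \<in> schedules J prec"
    "\<forall>\<pi>\<in>schedules J prec. quant K k J p d w \<pi>h \<le> quant K k J p d w \<pi>"
    "\<pi> \<in> schedules J prec"
  then show "OWA K v J p d w \<pi>h \<le> (1 / v k) * OWA K v J p d w \<pi>"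
    by (intro min_quant_owa_approximation) auto
qed (rule min_max_bound_tight)

end
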